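(* Let $G'$ be a graph with a spanning tree $T'$; colour the edges of $T'$ green and all other edges of $G'$ black. Suppose $G$ with green edge set $E(T)$ is obtained from $G'$ with this colouring by a Tutte-extension or a diamond-extension. Then $T$ is a spanning tree of $G$, and $G-E(T)$ can be decomposed into a (possibly empty) 2-regular graph and a (possibly empty) matching if and only if $G'-E(T')$ can.
   Context: All graphs are finite and simple. Tutte-extension: choose two distinct green edges $x_uy_u$ and $x_vy_v$ (possibly sharing an end); subdivide the first by a new vertex $u$ and the second by a new vertex $v$, the four resulting edges being green, and add a new black edge $uv$. Diamond-extension: choose a green edge $xy$, delete it, add new vertices $d_1,d_2,d_3,d_4$ with green edges $xd_1,d_1d_3,d_3d_2,d_2d_4,d_4y$ and black edges $d_1d_2,d_3d_4$. A decomposition of a graph is a partition of its edge set into the edge sets of the listed subgraphs. *)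

theory Defs
  imports Main
begin

definition simple_graph :: "'a set \<Rightarrow> 'a set set \<Rightarrow> bool" where
  "simple_graph V E \<longleftrightarrow> finite V \<and> (\<forall>e\<in>E. e \<subseteq> V \<and> card e = 2)"

definition reach :: "'a set set \<Rightarrow> 'a \<Rightarrow> 'a \<Rightarrow> bool" where
  "reach F = (\<lambda>a b. {a, b} \<in> F)\<^sup>*\<^sup>*"

definition connected_on :: "'a set \<Rightarrow> 'a set set \<Rightarrow> bool" where
  "connected_on V F \<longleftrightarrow> (\<forall>x\<in>V. \<forall>y\<in>V. reach F x y)"

definition is_cycle :: "'a set set \<Rightarrow> 'a list \<Rightarrow> bool" where
  "is_cycle F vs \<longleftrightarrow> length vs \<ge> 3 \<and> distinct vs \<and>
     (\<forall>i<length vs. {vs ! i, vs ! ((i + 1) mod length vs)} \<in> F)"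

definition acyclic_edges :: "'a set set \<Rightarrow> bool" where
  "acyclic_edges F \<longleftrightarrow> \<not> (\<exists>vs. is_cycle F vs)"

definition spanning_tree :: "'a set \<Rightarrow> 'a set set \<Rightarrow> 'a set set \<Rightarrow> bool" where
  "spanning_tree V E T \<longleftrightarrow> T \<subseteq> E \<and> connected_on V T \<and> acyclic_edges T"

definition tutte_ext :: "'a set \<Rightarrow> 'a set set \<Rightarrow> 'a set set \<Rightarrow> 'a set \<Rightarrow> 'a set set \<Rightarrow> 'a set set \<Rightarrow> bool" where
  "tutte_ext V' E' T' V E T \<longleftrightarrow>
    (\<exists>xu yu xv yv u v.
       {xu, yu} \<in> T' \<and> {xv, yv} \<in> T' \<and> {xu, yu} \<noteq> {xv, yv} \<and>
       u \<notin> V' \<and> v \<notin> V' \<and> u \<noteq> v \<and>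
       V = V' \<union> {u, v} \<and>
       T = (T' - {{xu, yu}, {xv, yv}}) \<union> {{xu, u}, {u, yu}, {xv, v}, {v, yv}} \<and>
       E = (E' - {{xu, yu}, {xv, yv}}) \<union> {{xu, u}, {u, yu}, {xv, v}, {v, yv}} \<union> {{u, v}})"

definition diamond_ext :: "'a set \<Rightarrow> 'a set set \<Rightarrow> 'a set set \<Rightarrow> 'a set \<Rightarrow> 'a set set \<Rightarrow> 'a set set \<Rightarrow> bool" where
  "diamond_ext V' E' T' V E T \<longleftrightarrow>
    (\<exists>x y d1 d2 d3 d4.
       {x, y} \<in> T' \<and>
       d1 \<notin> V' \<and> d2 \<notin> V' \<and> d3 \<notin> V' \<and> d4 \<notin> V' \<and> distinct [d1, d2, d3, d4] \<and>
       V = V' \<union> {d1, d2, d3, d4} \<and>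
       T = (T' - {{x, y}}) \<union> {{x, d1}, {d1, d3}, {d3, d2}, {d2, d4}, {d4, y}} \<and>
       E = (E' - {{x, y}}) \<union> {{x, d1}, {d1, d3}, {d3, d2}, {d2, d4}, {d4, y}} \<union> {{d1, d2}, {d3, d4}})"

definition two_regular_edges :: "'a set set \<Rightarrow> bool" where
  "two_regular_edges A \<longleftrightarrow> (\<forall>w. (\<exists>e\<in>A. w \<in> e) \<longrightarrow> card {e\<in>A. w \<in> e} = 2)"

definition matching_edges :: "'a set set \<Rightarrow> bool" where
  "matching_edges B \<longleftrightarrow> (\<forall>e\<in>B. \<forall>f\<in>B. e \<noteq> f \<longrightarrow> e \<inter> f = {})"

definition decomp_2reg_matching :: "'a set set \<Rightarrow> bool" where
  "decomp_2reg_matching F \<longleftrightarrow>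
    (\<exists>A B. A \<union> B = F \<and> A \<inter> B = {} \<and> two_regular_edges A \<and> matching_edges B)"

end

(*
  Both extensions subdivide green edges by new vertices -- a Tutte-extension subdivides two
  green edges once each, a diamond-extension turns one green edge xy into the green path
  x d1 d3 d2 d4 y -- and then add black edges forming a matching on the new vertices.
  Subdividing an edge of a spanning tree by a vertex outside the graph gives a spanning tree of
  the subdivided graph and leaves the set of non-tree edges unchanged. Hence G - E(T) is
  G' - E(T') plus a matching M vertex-disjoint from it. The endpoints of an edge of M have
  degree one in G - E(T), so no 2-regular subgraph contains it: the edges of M can always be
  moved into, or out of, the matching part of a decomposition.
*)
theory Submission
  imports Defs
begin

definition subdivide :: "'a set set \<Rightarrow> 'a \<Rightarrow> 'a \<Rightarrow> 'a \<Rightarrow> 'a set set" where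
  "subdivide F a b w = (F - {{a, b}}) \<union> {{a, w}, {w, b}}"

lemma subdivide_mono: "F \<subseteq> G \<Longrightarrow> subdivide F a b w \<subseteq> subdivide G a b w"
  unfolding subdivide_def by blast

lemma Union_subdivide_subset: "\<Union>(subdivide F a b w) \<subseteq> insert a (insert b (insert w (\<Union>F)))"
  unfolding subdivide_def by blast

lemma Diff_subdivide:
  assumes "{a, b} \<in> T" "w \<notin> \<Union>E"
  shows "subdivide E a b w - subdivide T a b w = E - T"
  using assms unfolding subdivide_def by blast

lemma subdivide_subdivide:
  assumes "{c, d} \<noteq> {a, w}" "{c, d} \<noteq> {w, b}"
  shows "subdivide (subdivide X a b w) c d v = (X - {{a, b}, {c, d}}) \<union> {{a, w}, {w, b}, {c, v}, {v, d}}"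
proof -
  \<comment> \<open>stated for abstract edges, so that blast does not reason about equality of doubletons\<close>
  have "(Y - {p} \<union> {e1, e2}) - {q} \<union> {e3, e4} = (Y - {p, q}) \<union> {e1, e2, e3, e4}"
    if "q \<noteq> e1" "q \<noteq> e2" for Y :: "'b set" and p q e1 e2 e3 e4
    using that by blast
  from this[OF assms] show ?thesis
    unfolding subdivide_def .
qed

lemma subdivide_edge_avoiding: "e \<in> subdivide F a b w \<Longrightarrow> w \<notin> e \<Longrightarrow> e \<in> F"
  unfolding subdivide_def by blast

lemma subdivide_neighbour:
  assumes "{w, z} \<in> subdivide F a b w" "w \<notin> \<Union>F"
  shows "z \<in> {a, b}"
  using assms unfolding subdivide_def by (auto simp: doubleton_eq_iff)

section \<open>Connectivity\<close>

lemma reach_edge: "{x, y} \<in> F \<Longrightarrow> reach F x y"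
  unfolding reach_def by (rule r_into_rtranclp)

lemma reach_trans: "reach F x y \<Longrightarrow> reach F y z \<Longrightarrow> reach F x z"
  unfolding reach_def by (rule rtranclp_trans)

lemma reach_sym:
  assumes "reach F x y"
  shows "reach F y x"
proof -
  have "symp (\<lambda>a b. {a, b} \<in> F)"
    by (rule sympI) (simp add: insert_commute)
  then show ?thesis
    using assms unfolding reach_def by (blast dest: sympD[OF symp_rtranclp])
qed

lemma reach_subdivide:
  assumes "reach F x y"
  shows "reach (subdivide F a b w) x y"
proof -
  have "reach (subdivide F a b w) p q" if "{p, q} \<in> F" for p q
  proof (cases "{p, q} = {a, b}")
    case True
    have "reach (subdivide F a b w) a b"
      by (rule reach_trans[OF reach_edge reach_edge, of a w]) (auto simp: subdivide_def)
    with True show ?thesis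
      by (metis doubleton_eq_iff reach_sym)
  next
    case False
    with that show ?thesis
      by (intro reach_edge) (simp add: subdivide_def)
  qed
  with assms show ?thesis
    unfolding reach_def[of F]
  proof (induction rule: rtranclp_induct)
    case base
    show ?case by (simp add: reach_def)
  next
    case (step y z)
    then show ?case by (metis reach_trans)
  qed
qed

lemma connected_on_insert:
  assumes "connected_on V F" "a \<in> V" "reach F a w"
  shows "connected_on (insert w V) F"
proof -
  have "reach F x w" if "x \<in> V" for x
    using assms(1,2) that reach_trans[OF _ assms(3)] unfolding connected_on_def by blast
  moreover have "reach F w w"
    unfolding reach_def by simp
  ultimately show ?thesis
    using assms(1) unfolding connected_on_def by (blast intro: reach_sym)
qed

lemma connected_on_subdivide:
  assumes "connected_on V F" "a \<in> V"
  shows "connected_on (insert w V) (subdivide F a b w)"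
proof (rule connected_on_insert)
  show "connected_on V (subdivide F a b w)"
    using assms(1) unfolding connected_on_def by (blast intro: reach_subdivide)
  show "reach (subdivide F a b w) a w"
    by (rule reach_edge) (simp add: subdivide_def)
qed (fact assms(2))

section \<open>Cycles\<close>

lemma is_cycle_rotate:
  assumes "is_cycle F vs"
  shows "is_cycle F (rotate m vs)"
proof -
  let ?L = "length vs"
  have L: "?L \<ge> 3" "distinct vs"
    and edge: "\<And>i. i < ?L \<Longrightarrow> {vs ! i, vs ! ((i + 1) mod ?L)} \<in> F"
    using assms unfolding is_cycle_def by auto
  have pos: "?L > 0"
    using L(1) by linarith
  have "{rotate m vs ! i, rotate m vs ! ((i + 1) mod ?L)} \<in> F" if "i < ?L" for i
  proof -
    let ?k = "(m + i) mod ?L"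
    have "rotate m vs ! i = vs ! ?k"
      using that by (simp add: nth_rotate)
    moreover have "rotate m vs ! ((i + 1) mod ?L) = vs ! ((?k + 1) mod ?L)"
      using pos by (simp add: nth_rotate mod_add_right_eq mod_Suc_eq)
    moreover have "?k < ?L"
      using pos by simp
    ultimately show ?thesis
      using edge by simp
  qed
  then show ?thesis
    using L unfolding is_cycle_def by simp
qed

lemma is_cycle_avoiding:
  assumes "is_cycle F vs" "w \<notin> set vs" "\<And>e. e \<in> F \<Longrightarrow> w \<notin> e \<Longrightarrow> e \<in> G"
  shows "is_cycle G vs"
proof -
  have "{vs ! i, vs ! ((i + 1) mod length vs)} \<in> G" if "i < length vs" for i
  proof (rule assms(3))
    show "{vs ! i, vs ! ((i + 1) mod length vs)} \<in> F"
      using assms(1) that unfolding is_cycle_def by blast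
    have "(i + 1) mod length vs < length vs"
      by (rule mod_less_divisor) (use that in linarith)
    then show "w \<notin> {vs ! i, vs ! ((i + 1) mod length vs)}"
      using assms(2) that nth_mem by fastforce
  qed
  then show ?thesis
    using assms(1) unfolding is_cycle_def by blast
qed

lemma is_cycle_tl:
  assumes cycle: "is_cycle F ws" and long: "length ws \<ge> 4"
    and chord: "{last ws, ws ! 1} \<in> G"
    and edges: "\<And>e. e \<in> F \<Longrightarrow> hd ws \<notin> e \<Longrightarrow> e \<in> G"
  shows "is_cycle G (tl ws)"
proof -
  let ?L = "length ws"
  have dist: "distinct ws"
    and edge: "\<And>i. i < ?L \<Longrightarrow> {ws ! i, ws ! ((i + 1) mod ?L)} \<in> F"
    using cycle unfolding is_cycle_def by auto
  have nonempty: "ws \<noteq> []"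
    using long by (cases ws) auto
  have "{tl ws ! i, tl ws ! ((i + 1) mod (?L - 1))} \<in> G" if i: "i < ?L - 1" for i
  proof (cases "i + 2 < ?L")
    case True
    have "hd ws = ws ! 0"
      using nonempty by (simp add: hd_conv_nth)
    moreover have "ws ! 0 \<noteq> ws ! (i + 1)" "ws ! 0 \<noteq> ws ! (i + 2)"
      using True nonempty nth_eq_iff_index_eq[OF dist, of 0 "i + 1"]
        nth_eq_iff_index_eq[OF dist, of 0 "i + 2"]
      by simp_all
    ultimately have "hd ws \<notin> {ws ! (i + 1), ws ! (i + 2)}"
      by simp
    moreover have "{ws ! (i + 1), ws ! (i + 2)} \<in> F"
      using edge[of "i + 1"] True by simp
    ultimately show ?thesis
      using True by (simp add: nth_tl edges)
  next
    case False
    then have "i + 1 = ?L - 1"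
      using i by simp
    then have "tl ws ! i = last ws" "tl ws ! ((i + 1) mod (?L - 1)) = ws ! 1"
      using long nonempty by (simp_all add: nth_tl last_conv_nth)
    then show ?thesis
      using chord by simp
  qed
  then show ?thesis
    using cycle long unfolding is_cycle_def by (simp add: distinct_tl)
qed

lemma is_cycle_rotate_hd:
  assumes "is_cycle F vs" "w \<in> set vs"
  obtains ws where "is_cycle F ws" "hd ws = w"
proof -
  obtain j where "j < length vs" "vs ! j = w"
    using assms(2) by (auto simp: in_set_conv_nth)
  then have "hd (rotate j vs) = w"
    using hd_rotate_conv_nth[of vs j] by (cases vs) auto
  with is_cycle_rotate[OF assms(1)] show thesis
    by (rule that)
qed

text \<open>The two neighbours of the new vertex on a cycle are a and b, so the rest of the cycle
  together with the edge ab is a cycle of F; a triangle would need ab itself, which the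
  subdivision has removed.\<close>
lemma is_cycle_subdivide_tl:
  assumes cycle: "is_cycle (subdivide F a b w) ws" and hd_ws: "hd ws = w"
    and ab: "{a, b} \<in> F" and fresh: "w \<notin> \<Union>F"
  shows "is_cycle F (tl ws)"
proof -
  let ?S = "subdivide F a b w" and ?L = "length ws"
  have L: "?L \<ge> 3" "distinct ws"
    and edge: "\<And>i. i < ?L \<Longrightarrow> {ws ! i, ws ! ((i + 1) mod ?L)} \<in> ?S"
    using cycle unfolding is_cycle_def by auto
  have "ws \<noteq> []"
    using L(1) by (cases ws) auto
  then have "ws ! 0 = w"
    using hd_ws by (simp add: hd_conv_nth)
  then have "{w, ws ! 1} \<in> ?S" "{w, last ws} \<in> ?S"
    using edge[of 0] edge[of "?L - 1"] L(1) \<open>ws \<noteq> []\<close> by (simp_all add: last_conv_nth insert_commute)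
  then have "ws ! 1 \<in> {a, b}" "last ws \<in> {a, b}"
    using fresh by (auto dest: subdivide_neighbour)
  moreover have "ws ! 1 \<noteq> last ws"
    using L \<open>ws \<noteq> []\<close> nth_eq_iff_index_eq[OF L(2), of 1 "?L - 1"] by (simp add: last_conv_nth)
  ultimately have chord: "{last ws, ws ! 1} = {a, b}"
    by auto
  have "?L \<noteq> 3"
  proof
    assume "?L = 3"
    have "w \<noteq> a" "w \<noteq> b"
      using ab fresh by auto
    then have "{a, b} \<notin> ?S"
      using ab by (auto simp: subdivide_def doubleton_eq_iff)
    moreover have "{ws ! 1, ws ! 2} \<in> ?S"
      using edge[of 1] \<open>?L = 3\<close> by (simp add: numeral_2_eq_2)
    moreover have "last ws = ws ! 2"
      using \<open>?L = 3\<close> \<open>ws \<noteq> []\<close> by (simp add: last_conv_nth)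
    ultimately show False
      using chord by (metis insert_commute)
  qed
  show ?thesis
  proof (rule is_cycle_tl[OF cycle])
    show "4 \<le> ?L"
      using \<open>?L \<noteq> 3\<close> L(1) by simp
    show "{last ws, ws ! 1} \<in> F"
      using chord ab by simp
  qed (simp add: hd_ws subdivide_edge_avoiding)
qed

lemma acyclic_subdivide:
  assumes acyclic: "acyclic_edges F" and "{a, b} \<in> F" "w \<notin> \<Union>F"
  shows "acyclic_edges (subdivide F a b w)"
  unfolding acyclic_edges_def
proof
  assume "\<exists>vs. is_cycle (subdivide F a b w) vs"
  then obtain vs where cycle: "is_cycle (subdivide F a b w) vs" ..
  have no_cycle: "\<not> is_cycle F us" for us
    using acyclic unfolding acyclic_edges_def by blast
  show False
  proof (cases "w \<in> set vs")
    case False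
    have "is_cycle F vs"
      using cycle False by (rule is_cycle_avoiding) (rule subdivide_edge_avoiding)
    then show False
      using no_cycle by blast
  next
    case True
    with cycle obtain ws where "is_cycle (subdivide F a b w) ws" "hd ws = w"
      by (rule is_cycle_rotate_hd)
    then have "is_cycle F (tl ws)"
      using assms(2,3) by (rule is_cycle_subdivide_tl)
    then show False
      using no_cycle by blast
  qed
qed

section \<open>Spanning trees under subdivision\<close>

lemma spanning_tree_subdivide:
  assumes tree: "spanning_tree V E T" and EV: "\<Union>E \<subseteq> V" and ab: "{a, b} \<in> T" and "w \<notin> V"
  shows "spanning_tree (insert w V) (subdivide E a b w) (subdivide T a b w)"
    and "\<Union>(subdivide E a b w) \<subseteq> insert w V"
    and "subdivide E a b w - subdivide T a b w = E - T"
proof -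
  have T: "T \<subseteq> E" "connected_on V T" "acyclic_edges T"
    using tree unfolding spanning_tree_def by auto
  then have "a \<in> V" "b \<in> V" "w \<notin> \<Union>E" "w \<notin> \<Union>T"
    using EV ab \<open>w \<notin> V\<close> by auto
  have "subdivide T a b w \<subseteq> subdivide E a b w"
    using T(1) by (rule subdivide_mono)
  moreover have "connected_on (insert w V) (subdivide T a b w)"
    using T(2) \<open>a \<in> V\<close> by (rule connected_on_subdivide)
  moreover have "acyclic_edges (subdivide T a b w)"
    using T(3) ab \<open>w \<notin> \<Union>T\<close> by (rule acyclic_subdivide)
  ultimately show "spanning_tree (insert w V) (subdivide E a b w) (subdivide T a b w)"
    unfolding spanning_tree_def by blast
  show "\<Union>(subdivide E a b w) \<subseteq> insert w V"
    using Union_subdivide_subset[of E a b w] EV \<open>a \<in> V\<close> \<open>b \<in> V\<close> by blast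
  show "subdivide E a b w - subdivide T a b w = E - T"
    using ab \<open>w \<notin> \<Union>E\<close> by (rule Diff_subdivide)
qed

fun subdivide_path :: "'a set set \<Rightarrow> 'a \<Rightarrow> 'a \<Rightarrow> 'a list \<Rightarrow> 'a set set" where
  "subdivide_path F x y [] = F"
| "subdivide_path F x y (d # ds) = subdivide_path (subdivide F x y d) d y ds"

lemma spanning_tree_subdivide_path:
  assumes "spanning_tree V E T" "\<Union>E \<subseteq> V" "{x, y} \<in> T" "distinct ds" "set ds \<inter> V = {}"
  shows "spanning_tree (V \<union> set ds) (subdivide_path E x y ds) (subdivide_path T x y ds) \<and>
    \<Union>(subdivide_path E x y ds) \<subseteq> V \<union> set ds \<and>
    subdivide_path E x y ds - subdivide_path T x y ds = E - T"
  using assms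
proof (induction ds arbitrary: V E T x)
  case Nil
  then show ?case by simp
next
  case (Cons d ds)
  let ?V = "insert d V" and ?E = "subdivide E x y d" and ?T = "subdivide T x y d"
  have "d \<notin> V" "distinct ds" "set ds \<inter> ?V = {}"
    using Cons.prems(4,5) by auto
  note step = spanning_tree_subdivide[OF Cons.prems(1-3) \<open>d \<notin> V\<close>]
  have "{d, y} \<in> ?T"
    by (simp add: subdivide_def)
  with step(1,2) have "spanning_tree (?V \<union> set ds) (subdivide_path ?E d y ds) (subdivide_path ?T d y ds) \<and>
    \<Union>(subdivide_path ?E d y ds) \<subseteq> ?V \<union> set ds \<and>
    subdivide_path ?E d y ds - subdivide_path ?T d y ds = ?E - ?T"
    using \<open>distinct ds\<close> \<open>set ds \<inter> ?V = {}\<close> by (rule Cons.IH)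
  then show ?case
    using step(3) by simp
qed

fun path_edges :: "'a list \<Rightarrow> 'a set set" where
  "path_edges (a # b # vs) = insert {a, b} (path_edges (b # vs))"
| "path_edges _ = {}"

lemma subdivide_path_eq:
  assumes "ds \<noteq> []" "distinct (x # y # ds)" "set ds \<inter> \<Union>F = {}"
  shows "subdivide_path F x y ds = (F - {{x, y}}) \<union> path_edges (x # ds @ [y])"
  using assms
proof (induction ds arbitrary: F x)
  case Nil
  then show ?case by simp
next
  case (Cons d ds)
  show ?case
  proof (cases "ds = []")
    case True
    then show ?thesis
      by (simp add: subdivide_def)
  next
    case False
    have "distinct (d # y # ds)"
      using Cons.prems(2) by auto
    moreover have "set ds \<inter> \<Union>(subdivide F x y d) = {}"
      using Cons.prems(2,3) Union_subdivide_subset[of F x y d] by auto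
    ultimately have "subdivide_path (subdivide F x y d) d y ds
        = (subdivide F x y d - {{d, y}}) \<union> path_edges (d # ds @ [y])"
      by (rule Cons.IH[OF False])
    moreover have "{d, y} \<notin> F" "{d, y} \<noteq> {x, d}"
      using Cons.prems(2,3) by (auto simp: doubleton_eq_iff)
    then have "subdivide F x y d - {{d, y}} = (F - {{x, y}}) \<union> {{x, d}}"
      unfolding subdivide_def by auto
    ultimately show ?thesis
      using False by (cases ds) auto
  qed
qed
section \<open>Adding an isolated matching to the black graph\<close>

lemma matching_edges_subset: "matching_edges B \<Longrightarrow> C \<subseteq> B \<Longrightarrow> matching_edges C"
  unfolding matching_edges_def by blast

lemma matching_edges_Un:
  "matching_edges B \<Longrightarrow> matching_edges N \<Longrightarrow> \<Union>B \<inter> \<Union>N = {} \<Longrightarrow> matching_edges (B \<union> N)"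
  unfolding matching_edges_def by blast

lemma two_regular_disjoint_isolated_matching:
  assumes A: "two_regular_edges A" "A \<subseteq> F \<union> N"
    and N: "matching_edges N" "{} \<notin> N" "\<Union>N \<inter> \<Union>F = {}"
  shows "A \<inter> N = {}"
proof (rule ccontr)
  assume "A \<inter> N \<noteq> {}"
  then obtain e where "e \<in> A" "e \<in> N"
    by blast
  moreover obtain z where "z \<in> e"
    using N(2) \<open>e \<in> N\<close> by (metis all_not_in_conv)
  ultimately have e: "e \<in> A" "e \<in> N" "z \<in> e"
    by blast+
  have "{f \<in> A. z \<in> f} \<subseteq> {e}"
  proof
    fix f
    assume f: "f \<in> {f \<in> A. z \<in> f}"
    then have "f \<in> N"
      using A(2) N(3) e by blast
    then show "f \<in> {e}"
      using N(1) e f unfolding matching_edges_def by blast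
  qed
  then have "card {f \<in> A. z \<in> f} \<le> 1"
    using card_mono[of "{e}"] by simp
  moreover have "card {f \<in> A. z \<in> f} = 2"
    using A(1) e(1,3) unfolding two_regular_edges_def by auto
  ultimately show False
    by simp
qed

lemma decomp_2reg_matching_Un_isolated_matching:
  assumes N: "matching_edges N" "{} \<notin> N" "\<Union>N \<inter> \<Union>F = {}"
  shows "decomp_2reg_matching (F \<union> N) \<longleftrightarrow> decomp_2reg_matching F"
proof -
  have disjoint: "F \<inter> N = {}"
  proof -
    have "e \<notin> N" if "e \<in> F" for e
    proof
      assume "e \<in> N"
      then obtain z where "z \<in> e"
        using N(2) by (metis all_not_in_conv)
      then show False
        using \<open>e \<in> N\<close> \<open>e \<in> F\<close> N(3) by blast
    qed
    then show ?thesis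
      by blast
  qed
  show ?thesis
  proof
    assume "decomp_2reg_matching (F \<union> N)"
    then obtain A B where AB: "A \<union> B = F \<union> N" "A \<inter> B = {}" "two_regular_edges A" "matching_edges B"
      unfolding decomp_2reg_matching_def by blast
    then have "A \<inter> N = {}"
      using two_regular_disjoint_isolated_matching N by blast
    then have "A \<union> (B - N) = F" "A \<inter> (B - N) = {}"
      using AB(1,2) disjoint by blast+
    moreover have "matching_edges (B - N)"
      using AB(4) by (rule matching_edges_subset) blast
    ultimately show "decomp_2reg_matching F"
      using AB(3) unfolding decomp_2reg_matching_def by blast
  next
    assume "decomp_2reg_matching F"
    then obtain A B where AB: "A \<union> B = F" "A \<inter> B = {}" "two_regular_edges A" "matching_edges B"
      unfolding decomp_2reg_matching_def by blast
    have "A \<union> (B \<union> N) = F \<union> N" "A \<inter> (B \<union> N) = {}"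
      using AB(1,2) disjoint by blast+
    moreover have "matching_edges (B \<union> N)"
      using AB(1,4) N(1,3) by (intro matching_edges_Un) blast+
    ultimately show "decomp_2reg_matching (F \<union> N)"
      using AB(3) unfolding decomp_2reg_matching_def by blast
  qed
qed

section \<open>The two extensions\<close>

lemma spanning_tree_Un_non_tree_edges:
  assumes "spanning_tree V E T" "M \<inter> T = {}"
  shows "spanning_tree V (E \<union> M) T" "(E \<union> M) - T = (E - T) \<union> M"
  using assms unfolding spanning_tree_def by blast+

lemma simple_graph_Union_edges: "simple_graph V E \<Longrightarrow> \<Union>E \<subseteq> V"
  unfolding simple_graph_def by blast

lemma tutte_ext_adds_black_matching:
  assumes G: "simple_graph V' E'" and tree: "spanning_tree V' E' T'"
    and ext: "tutte_ext V' E' T' V E T"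
  obtains M where "spanning_tree V E T" "E - T = (E' - T') \<union> M"
    "matching_edges M" "{} \<notin> M" "\<Union>M \<inter> V' = {}"
proof -
  obtain xu yu xv yv u v where h:
    "{xu, yu} \<in> T'" "{xv, yv} \<in> T'" "{xu, yu} \<noteq> {xv, yv}"
    "u \<notin> V'" "v \<notin> V'" "u \<noteq> v" "V = V' \<union> {u, v}"
    "T = (T' - {{xu, yu}, {xv, yv}}) \<union> {{xu, u}, {u, yu}, {xv, v}, {v, yv}}"
    "E = (E' - {{xu, yu}, {xv, yv}}) \<union> {{xu, u}, {u, yu}, {xv, v}, {v, yv}} \<union> {{u, v}}"
    using ext unfolding tutte_ext_def by (elim exE conjE) (rule that)
  have EV: "\<Union>E' \<subseteq> V'"
    using G by (rule simple_graph_Union_edges)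
  then have "\<Union>T' \<subseteq> V'"
    using tree unfolding spanning_tree_def by blast
  then have "xv \<in> V'" "yv \<in> V'"
    using h(2) by auto
  note step1 = spanning_tree_subdivide[OF tree EV h(1,4)]
  have "{xv, yv} \<in> subdivide T' xu yu u" "v \<notin> insert u V'"
    using h(2,3,5,6) by (auto simp: subdivide_def)
  note step2 = spanning_tree_subdivide[OF step1(1,2) this]
  have "{xv, yv} \<noteq> {xu, u}" "{xv, yv} \<noteq> {u, yu}"
    using \<open>xv \<in> V'\<close> \<open>yv \<in> V'\<close> h(4) by auto
  then have T: "T = subdivide (subdivide T' xu yu u) xv yv v"
    and E: "E = subdivide (subdivide E' xu yu u) xv yv v \<union> {{u, v}}"
    unfolding h(8,9) by (simp_all add: subdivide_subdivide)
  have V: "V = insert v (insert u V')"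
    using h(7) by auto
  have "{u, v} \<notin> T'"
    using h(4) \<open>\<Union>T' \<subseteq> V'\<close> by blast
  moreover have "{u, v} \<noteq> {xu, u}" "{u, v} \<noteq> {u, yu}" "{u, v} \<noteq> {xv, v}" "{u, v} \<noteq> {v, yv}"
    using h(1,4-6) \<open>\<Union>T' \<subseteq> V'\<close> \<open>xv \<in> V'\<close> \<open>yv \<in> V'\<close> by (auto simp: doubleton_eq_iff)
  ultimately have "{{u, v}} \<inter> T = {}"
    unfolding h(8) by simp
  note black = spanning_tree_Un_non_tree_edges[OF step2(1)[folded V T] this]
  have "spanning_tree V E T" "E - T = (E' - T') \<union> {{u, v}}"
    using black step1(3) step2(3)[folded T] unfolding E by simp_all
  moreover have "matching_edges {{u, v}}"
    unfolding matching_edges_def by blast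
  ultimately show thesis
    using h(4,5) that by blast
qed

lemma diamond_ext_adds_black_matching:
  assumes G: "simple_graph V' E'" and tree: "spanning_tree V' E' T'"
    and ext: "diamond_ext V' E' T' V E T"
  obtains M where "spanning_tree V E T" "E - T = (E' - T') \<union> M"
    "matching_edges M" "{} \<notin> M" "\<Union>M \<inter> V' = {}"
proof -
  obtain x y d1 d2 d3 d4 where h:
    "{x, y} \<in> T'" "d1 \<notin> V'" "d2 \<notin> V'" "d3 \<notin> V'" "d4 \<notin> V'" "distinct [d1, d2, d3, d4]"
    "V = V' \<union> {d1, d2, d3, d4}"
    "T = (T' - {{x, y}}) \<union> {{x, d1}, {d1, d3}, {d3, d2}, {d2, d4}, {d4, y}}"
    "E = (E' - {{x, y}}) \<union> {{x, d1}, {d1, d3}, {d3, d2}, {d2, d4}, {d4, y}} \<union> {{d1, d2}, {d3, d4}}"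
    using ext unfolding diamond_ext_def by (elim exE conjE) (rule that)
  let ?ds = "[d1, d3, d2, d4]" and ?M = "{{d1, d2}, {d3, d4}}"
  have EV: "\<Union>E' \<subseteq> V'"
    using G by (rule simple_graph_Union_edges)
  moreover have "T' \<subseteq> E'"
    using tree unfolding spanning_tree_def by blast
  ultimately have "\<Union>T' \<subseteq> V'" "x \<in> V'" "y \<in> V'"
    using h(1) by auto
  have "x \<noteq> y"
    using G h(1) \<open>T' \<subseteq> E'\<close> unfolding simple_graph_def by fastforce
  have ds: "distinct ?ds" "set ?ds \<inter> V' = {}"
    using h(2-6) by auto
  then have "distinct (x # y # ?ds)"
    using \<open>x \<in> V'\<close> \<open>y \<in> V'\<close> \<open>x \<noteq> y\<close> by auto
  then have T: "T = subdivide_path T' x y ?ds" and E: "E = subdivide_path E' x y ?ds \<union> ?M"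
    using ds(2) EV \<open>\<Union>T' \<subseteq> V'\<close> unfolding h(8,9)
    by (subst subdivide_path_eq; auto)+
  have tree_ds: "spanning_tree (V' \<union> set ?ds) (subdivide_path E' x y ?ds) (subdivide_path T' x y ?ds)"
    "subdivide_path E' x y ?ds - subdivide_path T' x y ?ds = E' - T'"
    using spanning_tree_subdivide_path[OF tree EV h(1) ds] by auto
  have "{d1, d2} \<notin> T'" "{d3, d4} \<notin> T'"
    using h(2,4) \<open>\<Union>T' \<subseteq> V'\<close> by blast+
  moreover have "{d1, d2} \<notin> {{x, d1}, {d1, d3}, {d3, d2}, {d2, d4}, {d4, y}}"
    "{d3, d4} \<notin> {{x, d1}, {d1, d3}, {d3, d2}, {d2, d4}, {d4, y}}"
    using h(6) \<open>x \<in> V'\<close> \<open>y \<in> V'\<close> h(2-5) by (auto simp: doubleton_eq_iff)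
  ultimately have "?M \<inter> T = {}"
    unfolding h(8) by blast
  have V: "V' \<union> set ?ds = V"
    using h(7) by auto
  note black = spanning_tree_Un_non_tree_edges[OF tree_ds(1)[unfolded V, folded T] \<open>?M \<inter> T = {}\<close>]
  have "spanning_tree V E T" "E - T = (E' - T') \<union> ?M"
    using black tree_ds(2)[folded T] unfolding E by simp_all
  moreover have "matching_edges ?M"
    using h(6) unfolding matching_edges_def by auto
  ultimately show thesis
    using h(2-5) that by blast
qed

theorem lemma10:
  fixes V' V :: "'a set" and E' T' E T :: "'a set set"
  assumes "simple_graph V' E'"
    and "spanning_tree V' E' T'"
    and "tutte_ext V' E' T' V E T \<or> diamond_ext V' E' T' V E T"
  shows "spanning_tree V E T \<and>
         (decomp_2reg_matching (E - T) \<longleftrightarrow> decomp_2reg_matching (E' - T'))"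
proof -
  obtain M where tree: "spanning_tree V E T" and black: "E - T = (E' - T') \<union> M"
    and M: "matching_edges M" "{} \<notin> M" "\<Union>M \<inter> V' = {}"
    using assms(3) tutte_ext_adds_black_matching[OF assms(1,2)]
      diamond_ext_adds_black_matching[OF assms(1,2)] by blast
  have "\<Union>(E' - T') \<subseteq> V'"
    using simple_graph_Union_edges[OF assms(1)] by blast
  with M(3) have "\<Union>M \<inter> \<Union>(E' - T') = {}"
    by blast
  with tree black M(1,2) show ?thesis
    by (simp add: decomp_2reg_matching_Un_isolated_matching)
qed

end
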